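(* Let $X$ be a quasi-lattice and $x,y,z\in X$. Then: (1) $x\tilde\vee x=x\tilde\wedge x=x$. (2) For $\alpha\ge0$, $(\alpha x)\tilde\vee(\alpha y)=\alpha(x\tilde\vee y)$ and $(\alpha x)\tilde\wedge(\alpha y)=\alpha(x\tilde\wedge y)$. (3) For $\alpha\le 0$, $(\alpha x)\tilde\vee(\alpha y)=\alpha(x\tilde\wedge y)$ and $(\alpha x)\tilde\wedge(\alpha y)=\alpha(x\tilde\vee y)$. (4) $(x\tilde\vee y)+z=(x+z)\tilde\vee(y+z)$ and $(x\tilde\wedge y)+z=(x+z)\tilde\wedge(y+z)$. (5) $x^{\pm}\ge0$ and $x^-=(-x)^+$. (6) $\lceil x\rceil\ge0$ and $\lceil\alpha x\rceil=|\alpha|\lceil x\rceil$ for all $\alpha\in\mathbb R$; in particular $\lceil -x\rceil=\lceil x\rceil$. (7) $x=x^+-x^-$, $x^+\tilde\wedge x^-=0$ and $\lceil x\rceil=x^++x^-$. (8) If $x\ge0$, then $x\tilde\wedge 0=0$ and $x=x^+=\lceil x\rceil$. (9) $\lceil\lceil x\rceil\rceil=\lceil x\rceil$. (10) $x\tilde\vee y+x\tilde\wedge y=x+y$ and $x\tilde\vee y-x\tilde\wedge y=\lceil x-y\rceil$. (11) $x\tilde\vee y=\frac12(x+y)+\frac12\lceil x-y\rceil$ and $x\tilde\wedge y=\frac12(x+y)-\frac12\lceil x-y\rceil$.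
   Context: A pre-ordered Banach space is a real Banach space $X$ with a cone $X_+$ ($X_++X_+\subseteq X_+$, $\lambda X_+\subseteq X_+$ for $\lambda\ge0$); $x\le y$ means $y-x\in X_+$. For $A\subseteq X$, $\upsilon(A)$ is the set of upper bounds of $A$ and $\mu(A)$ the set of minimal upper bounds ($z\in\upsilon(A)$ with: $A\le w\le z$ implies $w=z$). Let $\sigma_{x,y}(z)=\|z-x\|+\|z-y\|$. A pre-ordered Banach space with closed cone is a $\upsilon$-quasi-lattice (resp. $\mu$-quasi-lattice) if for all $x,y$ the set $\upsilon(\{x,y\})$ (resp. $\mu(\{x,y\})$) is non-empty and contains a unique minimizer of $\sigma_{x,y}$ over that set, called the quasi-supremum $x\tilde\vee y$. A quasi-lattice is either a $\upsilon$- or a $\mu$-quasi-lattice, with $x\tilde\vee y$ the corresponding quasi-supremum. Define $x\tilde\wedge y:=-((-x)\tilde\vee(-y))$, $\lceil x\rceil:=(-x)\tilde\vee x$, $x^+:=0\tilde\vee x$, $x^-:=0\tilde\vee(-x)$. *)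

theory Defs
  imports "HOL-Analysis.Analysis"
begin

text \<open>A pre-ordered Banach space is a real Banach space (type class banach) together
with a cone C (closed under addition and non-negative scaling); x \<le> y iff y - x \<in> C.\<close>

definition pcone :: "'a::real_vector set \<Rightarrow> bool" where
  "pcone C \<longleftrightarrow> (\<forall>x\<in>C. \<forall>y\<in>C. x + y \<in> C) \<and> (\<forall>x\<in>C. \<forall>l::real. l \<ge> 0 \<longrightarrow> l *\<^sub>R x \<in> C)"

definition cle :: "'a::real_vector set \<Rightarrow> 'a \<Rightarrow> 'a \<Rightarrow> bool" where
  "cle C x y \<longleftrightarrow> y - x \<in> C"

definition ubs :: "'a::real_vector set \<Rightarrow> 'a set \<Rightarrow> 'a set" where
  "ubs C A = {z. \<forall>a\<in>A. cle C a z}"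

definition mubs :: "'a::real_vector set \<Rightarrow> 'a set \<Rightarrow> 'a set" where
  "mubs C A = {z \<in> ubs C A. \<forall>w. (\<forall>a\<in>A. cle C a w) \<and> cle C w z \<longrightarrow> w = z}"

definition sigma :: "'a::real_normed_vector \<Rightarrow> 'a \<Rightarrow> 'a \<Rightarrow> real" where
  "sigma x y z = norm (z - x) + norm (z - y)"

text \<open>The bound set used: mu = False gives upsilon-quasi-lattices, mu = True gives mu-quasi-lattices.\<close>
definition bset :: "'a::real_vector set \<Rightarrow> bool \<Rightarrow> 'a set \<Rightarrow> 'a set" where
  "bset C mu A = (if mu then mubs C A else ubs C A)"

definition is_qsup :: "'a::real_normed_vector set \<Rightarrow> bool \<Rightarrow> 'a \<Rightarrow> 'a \<Rightarrow> 'a \<Rightarrow> bool" where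
  "is_qsup C mu x y z \<longleftrightarrow> z \<in> bset C mu {x, y} \<and> (\<forall>w\<in>bset C mu {x, y}. sigma x y z \<le> sigma x y w)"

definition quasi_lattice :: "'a::banach set \<Rightarrow> bool \<Rightarrow> bool" where
  "quasi_lattice C mu \<longleftrightarrow> pcone C \<and> closed C \<and>
     (\<forall>x y. bset C mu {x, y} \<noteq> {} \<and> (\<exists>!z. is_qsup C mu x y z))"

definition qsup :: "'a::real_normed_vector set \<Rightarrow> bool \<Rightarrow> 'a \<Rightarrow> 'a \<Rightarrow> 'a" where
  "qsup C mu x y = (THE z. is_qsup C mu x y z)"

definition qinf :: "'a::real_normed_vector set \<Rightarrow> bool \<Rightarrow> 'a \<Rightarrow> 'a \<Rightarrow> 'a" where
  "qinf C mu x y = - qsup C mu (- x) (- y)"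

definition qabs :: "'a::real_normed_vector set \<Rightarrow> bool \<Rightarrow> 'a \<Rightarrow> 'a" where
  "qabs C mu x = qsup C mu (- x) x"

definition qpos :: "'a::real_normed_vector set \<Rightarrow> bool \<Rightarrow> 'a \<Rightarrow> 'a" where
  "qpos C mu x = qsup C mu 0 x"

definition qneg :: "'a::real_normed_vector set \<Rightarrow> bool \<Rightarrow> 'a \<Rightarrow> 'a" where
  "qneg C mu x = qsup C mu 0 (- x)"

end

theory Submission
  imports Defs
begin

text \<open>The quasi-supremum is the unique minimiser of z \<mapsto> \<parallel>z - x\<parallel> + \<parallel>z - y\<parallel> over the
  (minimal) upper bounds of {x, y}. A map z \<mapsto> a z + t with a > 0 is an automorphism of
  the cone order that carries these bound sets onto each other and scales the objective
  by a, so by uniqueness it commutes with the quasi-supremum; swapping x and y changes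
  nothing either. If x \<le> y, the triangle inequality shows that y itself is the
  minimiser. Every identity of the theorem is then linear algebra on top of these three
  facts, with the quasi-infimum, positive part, negative part and modulus all expressed
  through the quasi-supremum.\<close>

lemma pcone_add: "pcone C \<Longrightarrow> x \<in> C \<Longrightarrow> y \<in> C \<Longrightarrow> x + y \<in> C"
  by (simp add: pcone_def)

lemma pcone_scaleR: "pcone C \<Longrightarrow> x \<in> C \<Longrightarrow> l \<ge> 0 \<Longrightarrow> l *\<^sub>R x \<in> C"
  by (simp add: pcone_def)

lemma cle_affine_iff:
  assumes "pcone C" and "a > 0"
  shows "cle C (a *\<^sub>R u + t) (a *\<^sub>R v + t) \<longleftrightarrow> cle C u v"
proof -
  have "a *\<^sub>R (v - u) \<in> C \<longleftrightarrow> v - u \<in> C"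
  proof
    assume "a *\<^sub>R (v - u) \<in> C"
    from pcone_scaleR[OF assms(1) this, of "1/a"] assms
    show "v - u \<in> C"
      by simp
  qed (use assms in \<open>simp add: pcone_scaleR\<close>)
  moreover have "(a *\<^sub>R v + t) - (a *\<^sub>R u + t) = a *\<^sub>R (v - u)"
    by (simp add: algebra_simps)
  ultimately show ?thesis
    by (simp add: cle_def)
qed

lemma ubs_image:
  assumes emb: "\<And>u v. cle C (f u) (f v) \<longleftrightarrow> cle C u v" and "surj f"
  shows "ubs C (f ` A) = f ` ubs C A"
proof
  show "f ` ubs C A \<subseteq> ubs C (f ` A)"
    using emb by (auto simp: ubs_def)
  show "ubs C (f ` A) \<subseteq> f ` ubs C A"
  proof
    fix z assume "z \<in> ubs C (f ` A)"
    moreover obtain z' where "z = f z'"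
      using \<open>surj f\<close> by (metis surjD)
    ultimately show "z \<in> f ` ubs C A"
      using emb by (auto simp: ubs_def)
  qed
qed

lemma mubs_eq: "mubs C A = {z \<in> ubs C A. \<forall>w \<in> ubs C A. cle C w z \<longrightarrow> w = z}"
  by (auto simp: mubs_def ubs_def)

lemma mubs_image:
  assumes emb: "\<And>u v. cle C (f u) (f v) \<longleftrightarrow> cle C u v" and "bij f"
  shows "mubs C (f ` A) = f ` mubs C A"
proof -
  have ubs: "ubs C (f ` A) = f ` ubs C A"
    using ubs_image[OF emb] \<open>bij f\<close> by (simp add: bij_is_surj)
  have "inj f"
    using \<open>bij f\<close> by (rule bij_is_inj)
  then show ?thesis
    unfolding mubs_eq ubs by (auto simp: emb inj_eq)
qed

lemma bset_image:
  assumes "\<And>u v. cle C (f u) (f v) \<longleftrightarrow> cle C u v" and "bij f"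
  shows "bset C mu (f ` A) = f ` bset C mu A"
  using ubs_image[OF assms(1) bij_is_surj[OF assms(2)]] mubs_image[OF assms] by (simp add: bset_def)

lemma bij_affine:
  fixes t :: "'a::real_vector"
  assumes "a \<noteq> 0"
  shows "bij (\<lambda>u. a *\<^sub>R u + t)"
proof (rule bijI)
  show "inj (\<lambda>u. a *\<^sub>R u + t)"
    using assms by (auto intro: injI)
  show "surj (\<lambda>u. a *\<^sub>R u + t)"
  proof (rule surjI)
    fix w show "a *\<^sub>R ((1/a) *\<^sub>R (w - t)) + t = w"
      using assms by simp
  qed
qed

lemma sigma_affine:
  assumes "a > 0"
  shows "sigma (a *\<^sub>R x + t) (a *\<^sub>R y + t) (a *\<^sub>R z + t) = a * sigma x y z"
proof -
  have "(a *\<^sub>R z + t) - (a *\<^sub>R x + t) = a *\<^sub>R (z - x)"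
       "(a *\<^sub>R z + t) - (a *\<^sub>R y + t) = a *\<^sub>R (z - y)"
    by (simp_all add: algebra_simps)
  then show ?thesis
    using assms by (simp add: sigma_def distrib_left)
qed

lemma qneg_eq_qpos_uminus: "qneg C mu x = qpos C mu (- x)"
  by (simp add: qneg_def qpos_def)

context
  fixes C :: "'a::banach set" and mu :: bool
  assumes ql: "quasi_lattice C mu"
begin

lemma quasi_lattice_pcone: "pcone C"
  using ql by (simp add: quasi_lattice_def)

lemma qsup_is_qsup: "is_qsup C mu x y (qsup C mu x y)"
  using ql unfolding quasi_lattice_def qsup_def by (metis theI')

lemma qsup_eqI: "is_qsup C mu x y z \<Longrightarrow> qsup C mu x y = z"
  using ql unfolding quasi_lattice_def qsup_def by (metis the1_equality)

lemma qsup_in_ubs: "qsup C mu x y \<in> ubs C {x, y}"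
  using qsup_is_qsup[of x y] by (auto simp: is_qsup_def bset_def mubs_def split: if_splits)

lemma quasi_lattice_zero_in_cone: "0 \<in> C"
proof -
  obtain z where "z \<in> ubs C {0}"
    using qsup_in_ubs[of 0 0] by auto
  then have "z \<in> C"
    by (simp add: ubs_def cle_def)
  then show ?thesis
    using pcone_scaleR[OF quasi_lattice_pcone, of z 0] by simp
qed

lemma cle_refl: "cle C x x"
  using quasi_lattice_zero_in_cone by (simp add: cle_def)

text \<open>For c, -c \<in> C and a minimal upper bound z of 0, z - c is an upper bound of 0
  below z.\<close>
lemma mu_cone_pointed:
  assumes mu and "c \<in> C" and "- c \<in> C"
  shows "c = 0"
proof -
  have "mubs C {0, 0} \<noteq> {}"
    using ql \<open>mu\<close> unfolding quasi_lattice_def bset_def by metis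
  then obtain z where z: "z \<in> mubs C {0}"
    by auto
  then have "z \<in> C"
    by (simp add: mubs_def ubs_def cle_def)
  then have "z - c \<in> C"
    using pcone_add[OF quasi_lattice_pcone _ assms(3)] by simp
  then have "z - c = z"
    using z assms(2) by (auto simp: mubs_def cle_def)
  then show ?thesis
    by simp
qed

lemma qsup_commute: "qsup C mu x y = qsup C mu y x"
proof -
  have "is_qsup C mu y x (qsup C mu x y)"
    using qsup_is_qsup[of x y] by (simp add: is_qsup_def sigma_def insert_commute add.commute)
  then show ?thesis
    by (rule qsup_eqI[symmetric])
qed

lemma qsup_affine:
  assumes "a > 0"
  shows "qsup C mu (a *\<^sub>R x + t) (a *\<^sub>R y + t) = a *\<^sub>R qsup C mu x y + t"
proof (rule qsup_eqI)
  define f where "f u = a *\<^sub>R u + t" for u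
  have emb: "cle C (f u) (f v) \<longleftrightarrow> cle C u v" for u v
    unfolding f_def using quasi_lattice_pcone assms by (rule cle_affine_iff)
  have "bij f"
    unfolding f_def using assms by (simp add: bij_affine)
  have "bset C mu {f x, f y} = f ` bset C mu {x, y}"
    using bset_image[OF emb \<open>bij f\<close>, of mu "{x, y}"] by simp
  moreover have "sigma (f x) (f y) (f u) = a * sigma x y u" for u
    unfolding f_def using assms by (rule sigma_affine)
  ultimately have "is_qsup C mu (f x) (f y) (f (qsup C mu x y))"
    using qsup_is_qsup[of x y] assms by (auto simp: is_qsup_def)
  then show "is_qsup C mu (a *\<^sub>R x + t) (a *\<^sub>R y + t) (a *\<^sub>R qsup C mu x y + t)"
    by (simp add: f_def)
qed

lemma qsup_translate: "qsup C mu (x + t) (y + t) = qsup C mu x y + t"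
  using qsup_affine[of 1] by simp

text \<open>In the mu case, y is a minimal upper bound because the cone is pointed.\<close>
lemma qsup_absorb2:
  assumes "cle C x y"
  shows "qsup C mu x y = y"
proof (rule qsup_eqI)
  have ubs: "y \<in> ubs C {x, y}"
    using assms cle_refl by (simp add: ubs_def)
  have "y \<in> mubs C {x, y}" if mu
  proof -
    have "w = y" if "cle C y w" and "cle C w y" for w
      using mu_cone_pointed[OF \<open>mu\<close>, of "w - y"] that by (simp add: cle_def)
    then show ?thesis
      using ubs by (auto simp: mubs_def)
  qed
  then have "y \<in> bset C mu {x, y}"
    using ubs by (simp add: bset_def)
  moreover have "sigma x y y \<le> sigma x y w" for w
    using norm_triangle_ineq4[of "w - x" "w - y"] by (simp add: sigma_def)
  ultimately show "is_qsup C mu x y y"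
    by (simp add: is_qsup_def)
qed

lemma qsup_idem: "qsup C mu x x = x"
  by (rule qsup_absorb2[OF cle_refl])

lemma qsup_scaleR:
  assumes "a \<ge> 0"
  shows "qsup C mu (a *\<^sub>R x) (a *\<^sub>R y) = a *\<^sub>R qsup C mu x y"
proof (cases "a = 0")
  case True
  then show ?thesis
    using qsup_idem[of 0] by simp
next
  case False
  then show ?thesis
    using qsup_affine[of a x 0 y] assms by simp
qed

lemma qinf_conv_qsup: "qinf C mu x y = x + y - qsup C mu x y"
proof -
  have "qsup C mu (- x + (x + y)) (- y + (x + y)) = qsup C mu (- x) (- y) + (x + y)"
    by (rule qsup_translate)
  then show ?thesis
    using qsup_commute[of x y] by (simp add: qinf_def algebra_simps)
qed

lemma qsup_add_qinf: "qsup C mu x y + qinf C mu x y = x + y"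
  by (simp add: qinf_conv_qsup)

lemma qinf_idem: "qinf C mu x x = x"
  using qsup_idem[of x] by (simp add: qinf_conv_qsup)

lemma qinf_translate: "qinf C mu (x + t) (y + t) = qinf C mu x y + t"
  using qsup_translate[of x t y] by (simp add: qinf_conv_qsup algebra_simps)

lemma qinf_scaleR:
  assumes "a \<ge> 0"
  shows "qinf C mu (a *\<^sub>R x) (a *\<^sub>R y) = a *\<^sub>R qinf C mu x y"
  using qsup_scaleR[OF assms, of x y] by (simp add: qinf_conv_qsup algebra_simps)

lemma qsup_scaleR_nonpos:
  assumes "a \<le> 0"
  shows "qsup C mu (a *\<^sub>R x) (a *\<^sub>R y) = a *\<^sub>R qinf C mu x y"
  using qsup_scaleR[of "- a" "- x" "- y"] assms by (simp add: qinf_def)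

lemma qinf_scaleR_nonpos:
  assumes "a \<le> 0"
  shows "qinf C mu (a *\<^sub>R x) (a *\<^sub>R y) = a *\<^sub>R qsup C mu x y"
  using qsup_scaleR[of "- a" x y] assms by (simp add: qinf_def)

lemma qneg_conv_qpos: "qneg C mu x = qpos C mu x - x"
  using qsup_translate[of 0 x "- x"] qsup_commute[of x 0]
  by (simp add: qpos_def qneg_def algebra_simps)

lemma qabs_eq_qpos_add_qneg: "qabs C mu x = qpos C mu x + qneg C mu x"
proof -
  have "qsup C mu (0 + - x) (2 *\<^sub>R x + - x) = qsup C mu 0 (2 *\<^sub>R x) + - x"
    by (rule qsup_translate)
  then have "qabs C mu x = 2 *\<^sub>R qpos C mu x - x"
    using qsup_scaleR[of 2 0 x] by (simp add: qabs_def qpos_def scaleR_2)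
  then show ?thesis
    by (simp add: qneg_conv_qpos scaleR_2)
qed

lemma qpos_nonneg: "cle C 0 (qpos C mu x)"
  using qsup_in_ubs[of 0 x] by (simp add: qpos_def ubs_def)

lemma qneg_nonneg: "cle C 0 (qneg C mu x)"
  using qsup_in_ubs[of 0 "- x"] by (simp add: qneg_def ubs_def)

lemma qabs_nonneg: "cle C 0 (qabs C mu x)"
  using pcone_add[OF quasi_lattice_pcone] qpos_nonneg[of x] qneg_nonneg[of x]
  by (simp add: qabs_eq_qpos_add_qneg cle_def)

lemma qabs_scaleR: "qabs C mu (a *\<^sub>R x) = \<bar>a\<bar> *\<^sub>R qabs C mu x"
proof (cases "a \<ge> 0")
  case True
  then show ?thesis
    using qsup_scaleR[of a "- x" x] by (simp add: qabs_def)
next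
  case False
  then show ?thesis
    using qsup_scaleR[of "- a" x "- x"] qsup_commute[of x "- x"] by (simp add: qabs_def)
qed

lemma qabs_uminus: "qabs C mu (- x) = qabs C mu x"
  using qsup_commute[of x "- x"] by (simp add: qabs_def)

lemma qinf_qpos_qneg: "qinf C mu (qpos C mu x) (qneg C mu x) = 0"
proof -
  have "qsup C mu (x + qneg C mu x) (0 + qneg C mu x) = qsup C mu x 0 + qneg C mu x"
    by (rule qsup_translate)
  then show ?thesis
    using qsup_commute[of x 0] by (simp add: qinf_conv_qsup qneg_conv_qpos qpos_def)
qed

lemma qpos_of_nonneg:
  assumes "cle C 0 x"
  shows "qpos C mu x = x"
  using qsup_absorb2[OF assms] by (simp add: qpos_def)

lemma qneg_of_nonneg:
  assumes "cle C 0 x"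
  shows "qneg C mu x = 0"
proof -
  have "cle C (- x) 0"
    using assms by (simp add: cle_def)
  then show ?thesis
    using qsup_absorb2 qsup_commute[of 0 "- x"] by (simp add: qneg_def)
qed

lemma qinf_zero_of_nonneg:
  assumes "cle C 0 x"
  shows "qinf C mu x 0 = 0"
  using qpos_of_nonneg[OF assms] qsup_commute[of x 0] by (simp add: qinf_conv_qsup qpos_def)

lemma qabs_of_nonneg:
  assumes "cle C 0 x"
  shows "qabs C mu x = x"
  using qpos_of_nonneg[OF assms] qneg_of_nonneg[OF assms] by (simp add: qabs_eq_qpos_add_qneg)

lemma qpos_minus_qneg: "qpos C mu x - qneg C mu x = x"
  by (simp add: qneg_conv_qpos)

lemma qsup_minus_qinf: "qsup C mu x y - qinf C mu x y = qabs C mu (x - y)"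
proof -
  have "qsup C mu (y + - y) (x + - y) = qsup C mu y x + - y"
    by (rule qsup_translate)
  then have "qpos C mu (x - y) = qsup C mu x y - y"
    using qsup_commute[of y x] by (simp add: qpos_def)
  then show ?thesis
    by (simp add: qabs_eq_qpos_add_qneg qneg_conv_qpos qinf_conv_qsup algebra_simps)
qed

lemma qsup_midpoint: "qsup C mu x y = (1/2) *\<^sub>R (x + y) + (1/2) *\<^sub>R qabs C mu (x - y)"
proof -
  have double: "2 *\<^sub>R qsup C mu x y = (x + y) + qabs C mu (x - y)"
    using qsup_minus_qinf[of x y] by (simp add: qinf_conv_qsup scaleR_2 algebra_simps)
  have "qsup C mu x y = (1/2) *\<^sub>R (2 *\<^sub>R qsup C mu x y)"
    by simp
  also have "\<dots> = (1/2) *\<^sub>R (x + y) + (1/2) *\<^sub>R qabs C mu (x - y)"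
    by (simp only: double scaleR_add_right)
  finally show ?thesis .
qed


lemma qabs_qabs: "qabs C mu (qabs C mu x) = qabs C mu x"
  using qabs_of_nonneg[OF qabs_nonneg] .

lemma qinf_midpoint: "qinf C mu x y = (1/2) *\<^sub>R (x + y) - (1/2) *\<^sub>R qabs C mu (x - y)"
proof -
  have half: "(x + y) - (1/2) *\<^sub>R (x + y) = (1/2) *\<^sub>R (x + y)"
    using scaleR_diff_left[of 1 "1/2" "x + y"] by simp
  show ?thesis
    unfolding qinf_conv_qsup qsup_midpoint[of x y] by (simp only: diff_diff_eq[symmetric] half)
qed

end

theorem theorem5p8:
  fixes C :: "'a::banach set" and mu :: bool and x y z :: 'a
  assumes "quasi_lattice C mu"
  shows
   "(qsup C mu x x = x \<and> qinf C mu x x = x)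
  \<and> (\<forall>a::real. a \<ge> 0 \<longrightarrow>
        qsup C mu (a *\<^sub>R x) (a *\<^sub>R y) = a *\<^sub>R qsup C mu x y \<and>
        qinf C mu (a *\<^sub>R x) (a *\<^sub>R y) = a *\<^sub>R qinf C mu x y)
  \<and> (\<forall>a::real. a \<le> 0 \<longrightarrow>
        qsup C mu (a *\<^sub>R x) (a *\<^sub>R y) = a *\<^sub>R qinf C mu x y \<and>
        qinf C mu (a *\<^sub>R x) (a *\<^sub>R y) = a *\<^sub>R qsup C mu x y)
  \<and> (qsup C mu x y + z = qsup C mu (x + z) (y + z) \<and>
     qinf C mu x y + z = qinf C mu (x + z) (y + z))
  \<and> (cle C 0 (qpos C mu x) \<and> cle C 0 (qneg C mu x) \<and> qneg C mu x = qpos C mu (- x))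
  \<and> (cle C 0 (qabs C mu x) \<and>
     (\<forall>a::real. qabs C mu (a *\<^sub>R x) = \<bar>a\<bar> *\<^sub>R qabs C mu x) \<and>
     qabs C mu (- x) = qabs C mu x)
  \<and> (x = qpos C mu x - qneg C mu x \<and> qinf C mu (qpos C mu x) (qneg C mu x) = 0 \<and>
     qabs C mu x = qpos C mu x + qneg C mu x)
  \<and> (cle C 0 x \<longrightarrow> qinf C mu x 0 = 0 \<and> x = qpos C mu x \<and> x = qabs C mu x)
  \<and> (qabs C mu (qabs C mu x) = qabs C mu x)
  \<and> (qsup C mu x y + qinf C mu x y = x + y \<and> qsup C mu x y - qinf C mu x y = qabs C mu (x - y))
  \<and> (qsup C mu x y = (1/2) *\<^sub>R (x + y) + (1/2) *\<^sub>R qabs C mu (x - y) \<and>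
     qinf C mu x y = (1/2) *\<^sub>R (x + y) - (1/2) *\<^sub>R qabs C mu (x - y))"
proof -
  note facts = qsup_idem[OF assms] qinf_idem[OF assms] qsup_scaleR[OF assms] qinf_scaleR[OF assms]
      qsup_scaleR_nonpos[OF assms] qinf_scaleR_nonpos[OF assms]
      qsup_translate[OF assms, symmetric] qinf_translate[OF assms, symmetric]
      qpos_nonneg[OF assms] qneg_nonneg[OF assms] qneg_eq_qpos_uminus
      qabs_nonneg[OF assms] qabs_scaleR[OF assms] qabs_uminus[OF assms]
      qpos_minus_qneg[OF assms, symmetric] qinf_qpos_qneg[OF assms] qabs_eq_qpos_add_qneg[OF assms]
      qinf_zero_of_nonneg[OF assms] qpos_of_nonneg[OF assms, symmetric] qabs_of_nonneg[OF assms, symmetric]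
      qabs_qabs[OF assms] qsup_add_qinf[OF assms] qsup_minus_qinf[OF assms]
      qsup_midpoint[OF assms] qinf_midpoint[OF assms]
  show ?thesis
    by (intro conjI allI impI) (assumption | rule facts)+
qed

end
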